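(* Let $V\in L^\infty(\mathbb{R})$ with $\operatorname{ess\,inf}_{x\in\mathbb{R}}V(x)>0$, and suppose that $$m(V)=\lim_{a\to\infty}F(a;V)\quad\text{or}\quad m(V)=\lim_{a\to-\infty}F(a;V).$$ Let $p\in[1,\infty)$ and let $\mu\in L^p(\mathbb{R})+\mathcal{M}_1(\mathbb{R})$ be nonnegative in the sense that $\mu(u,u)\ge0$ for all $u\in H^1(\mathbb{R})$. Then $m(V+\mu)=m(V)$ and $M(V+\mu)\subset M(V)$.
   Context: Elements of $H^1(\mathbb{R})$ are identified with their continuous representatives; $\|u\|_\infty:=\|u\|_{L^\infty(\mathbb{R})}$. Let $X$ be the Banach space of all bounded symmetric bilinear maps $V:H^1(\mathbb{R})\times H^1(\mathbb{R})\to\mathbb{R}$. A function $W\in L^q(\mathbb{R})$ ($1\le q\le\infty$) is regarded as an element of $X$ via $W(u,v):=\int_{\mathbb{R}}W uv\,dx$; $\mathcal{M}_1(\mathbb{R})$ is the set of signed Radon measures on $\mathbb{R}$ with finite total variation, regarded as elements of $X$ via $\mu(u,v):=\int_{\mathbb{R}}uv\,d\mu$; $L^p(\mathbb{R})+\mathcal{M}_1(\mathbb{R})$ denotes the set of sums $\mu_0+\mu_1\in X$ with $\mu_0\in L^p(\mathbb{R})$, $\mu_1\in\mathcal{M}_1(\mathbb{R})$. For $V\in X$ and $u\in H^1(\mathbb{R})$ set $I(u;V):=\|u'\|_{L^2(\mathbb{R})}^2+V(u,u)$, $m(V):=\inf_{u\in H^1(\mathbb{R}),\,u\not\equiv0}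 I(u;V)/\|u\|_\infty^2$, and $M(V):=\{u\in H^1(\mathbb{R})\setminus\{0\}: I(u;V)/\|u\|_\infty^2=m(V)\}$. For $a\in\mathbb{R}$ let $K_a:=\{u\in H^1(\mathbb{R}):u(a)=\|u\|_\infty=1\}$ and $F(a;V):=\inf_{u\in K_a}I(u;V)$. *)

theory Defs
  imports "HOL-Analysis.Analysis"
begin

text \<open>In one dimension this is
  exactly H^1(R), each element identified with its continuous representative.\<close>
definition is_H1_deriv :: "(real \<Rightarrow> real) \<Rightarrow> (real \<Rightarrow> real) \<Rightarrow> bool" where
  "is_H1_deriv u g \<longleftrightarrow> g \<in> borel_measurable lborel \<and> integrable lborel (\<lambda>x. (g x)\<^sup>2) \<and>
     (\<forall>a b. a \<le> b \<longrightarrow> u b - u a = (LINT x:{a..b}|lborel. g x))"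

definition H1 :: "(real \<Rightarrow> real) set" where
  "H1 = {u. u \<in> borel_measurable lborel \<and> integrable lborel (\<lambda>x. (u x)\<^sup>2) \<and>
            (\<exists>g. is_H1_deriv u g)}"

definition H1_deriv :: "(real \<Rightarrow> real) \<Rightarrow> (real \<Rightarrow> real)" where
  "H1_deriv u = (SOME g. is_H1_deriv u g)"

text \<open>\<open>\<parallel>u'\<parallel>\<^sub>L\<^sub>2\<^sup>2\<close> (independent of the a.e.-unique choice of derivative).\<close>
definition dirichlet :: "(real \<Rightarrow> real) \<Rightarrow> real" where
  "dirichlet u = (LINT x|lborel. (H1_deriv u x)\<^sup>2)"

text \<open>sup norm (for continuous u equal to the essential sup norm).\<close>
definition sup_norm :: "(real \<Rightarrow> real) \<Rightarrow> real" where
  "sup_norm u = Sup (range (\<lambda>x. \<bar>u x\<bar>))"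

definition fun_form :: "(real \<Rightarrow> real) \<Rightarrow> (real \<Rightarrow> real) \<Rightarrow> real" where
  "fun_form W u = (LINT x|lborel. W x * (u x)\<^sup>2)"

definition meas_form :: "real measure \<Rightarrow> (real \<Rightarrow> real) \<Rightarrow> real" where
  "meas_form \<nu> u = (\<integral>x. (u x)\<^sup>2 \<partial>\<nu>)"

text \<open>Everything below depends on V \<in> X only through its quadratic form Q u = V(u,u).\<close>
definition Ifun :: "((real \<Rightarrow> real) \<Rightarrow> real) \<Rightarrow> (real \<Rightarrow> real) \<Rightarrow> real" where
  "Ifun Q u = dirichlet u + Q u"

definition mval :: "((real \<Rightarrow> real) \<Rightarrow> real) \<Rightarrow> real" where
  "mval Q = Inf {Ifun Q u / (sup_norm u)\<^sup>2 | u. u \<in> H1 \<and> u \<noteq> (\<lambda>x. 0)}"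

definition Mset :: "((real \<Rightarrow> real) \<Rightarrow> real) \<Rightarrow> (real \<Rightarrow> real) set" where
  "Mset Q = {u. u \<in> H1 \<and> u \<noteq> (\<lambda>x. 0) \<and> Ifun Q u / (sup_norm u)\<^sup>2 = mval Q}"

definition Kset :: "real \<Rightarrow> (real \<Rightarrow> real) set" where
  "Kset a = {u. u \<in> H1 \<and> u a = 1 \<and> sup_norm u = 1}"

definition Ffun :: "real \<Rightarrow> ((real \<Rightarrow> real) \<Rightarrow> real) \<Rightarrow> real" where
  "Ffun a Q = Inf (Ifun Q ` Kset a)"

end

theory Submission
  imports Defs
begin

text \<open>
  Since \<open>\<mu>\<close> is nonnegative, the perturbed quotient dominates the unperturbed one, so
  \<open>m(V + \<mu>) \<ge> m(V)\<close>, and once the two infima agree every minimizer for \<open>V + \<mu>\<close> is one for \<open>V\<close>.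
  For the reverse inequality, the limit hypothesis gives, for \<open>a\<close> far out, functions
  \<open>u \<in> K\<^sub>a\<close> with \<open>I(u; V)\<close> close to \<open>m(V)\<close>. As \<open>V \<ge> c\<^sub>0 > 0\<close>, their \<open>L\<^sup>2\<close> mass is bounded,
  so \<open>u\<close> is small at some point \<open>c\<close> between the origin and \<open>a\<close>; cutting \<open>u\<close> off linearly
  across \<open>c\<close> costs little energy and leaves a competitor vanishing near the origin.
  On such functions, bounded by \<open>1\<close> and of bounded \<open>L\<^sup>2\<close> mass, the perturbation is small:
  the \<open>L\<^sup>p\<close> part because \<open>\<bar>\<mu>\<^sub>0\<bar> w\<^sup>2\<close> splits into \<open>d w\<^sup>2\<close> plus an \<open>L\<^sup>p\<close> tail, the measure part
  because a finite measure has small mass far out.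
\<close>

section \<open>Absolutely continuous functions on the line\<close>

definition is_ftc_deriv :: "(real \<Rightarrow> real) \<Rightarrow> (real \<Rightarrow> real) \<Rightarrow> bool" where
  "is_ftc_deriv u g \<longleftrightarrow> (\<forall>a b. set_integrable lborel {a..b} g) \<and>
     (\<forall>a b. a \<le> b \<longrightarrow> u b - u a = (LINT x:{a..b}|lborel. g x))"

lemma abs_le_one_plus_square: "\<bar>y::real\<bar> \<le> 1 + y\<^sup>2"
proof (cases "\<bar>y\<bar> \<le> 1")
  case False
  then have "\<bar>y\<bar> \<le> \<bar>y\<bar> * \<bar>y\<bar>" by (intro mult_le_cancel_left1[THEN iffD2]) auto
  then show ?thesis by (simp add: power2_eq_square abs_mult[symmetric])
qed (simp add: add_increasing2)

lemma integrable_Icc_indicator: "integrable lborel (indicat_real {a..b::real})"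
  by (rule integrable_real_indicator) (auto simp: emeasure_lborel_Icc_eq)

lemma set_integrable_Icc_if_square_integrable:
  fixes g :: "real \<Rightarrow> real"
  assumes [measurable]: "g \<in> borel_measurable lborel" and "integrable lborel (\<lambda>x. (g x)\<^sup>2)"
  shows "set_integrable lborel {a..b} g"
  unfolding set_integrable_def
proof (rule Bochner_Integration.integrable_bound)
  show "integrable lborel (\<lambda>x. indicator {a..b} x + (g x)\<^sup>2 :: real)"
    using assms(2) integrable_Icc_indicator by (rule Bochner_Integration.integrable_add[rotated])
  show "AE x in lborel. norm (indicat_real {a..b} x *\<^sub>R g x) \<le> norm (indicator {a..b} x + (g x)\<^sup>2 :: real)"
    using abs_le_one_plus_square[of "g _"] by (intro AE_I2) (auto simp: indicator_def)
qed measurable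

lemma is_H1_deriv_imp_is_ftc_deriv: "is_H1_deriv u g \<Longrightarrow> is_ftc_deriv u g"
  unfolding is_H1_deriv_def is_ftc_deriv_def using set_integrable_Icc_if_square_integrable by blast

lemma is_ftc_derivD:
  assumes "is_ftc_deriv u g"
  shows "set_integrable lborel {a..b} g" "a \<le> b \<Longrightarrow> u b - u a = (LINT x:{a..b}|lborel. g x)"
  using assms unfolding is_ftc_deriv_def by blast+

lemma is_ftc_deriv_const: "is_ftc_deriv (\<lambda>x. k) (\<lambda>x. 0)"
  unfolding is_ftc_deriv_def by (auto simp: set_integrable_def set_lebesgue_integral_def)

lemma is_ftc_deriv_affine: "is_ftc_deriv (\<lambda>x. k * (x - x0)) (\<lambda>x. k)"
  unfolding is_ftc_deriv_def
proof (intro conjI allI impI)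
  show "set_integrable lborel {a..b} (\<lambda>x. k)" for a b :: real
    using integrable_Icc_indicator[of a b] by (simp add: set_integrable_def)
  show "k * (b - x0) - k * (a - x0) = (LINT x:{a..b}|lborel. k)" if "a \<le> b" for a b
    using that by (subst set_integral_const) (auto simp: emeasure_lborel_Icc_eq algebra_simps)
qed

lemma set_integral_Icc_split:
  fixes f :: "real \<Rightarrow> real"
  assumes "set_integrable lborel {a..b} f" "a \<le> c" "c \<le> b"
  shows "(LINT x:{a..b}|lborel. f x) = (LINT x:{a..c}|lborel. f x) + (LINT x:{c..b}|lborel. f x)"
proof -
  have "interval_lebesgue_integrable lborel (ereal a) (ereal b) f"
    using assms unfolding interval_lebesgue_integrable_def
    by (auto intro: set_integrable_subset[OF assms(1)] simp: einterval_def)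
  then have "(LBINT x=ereal a..ereal c. f x) + (LBINT x=ereal c..ereal b. f x) = (LBINT x=ereal a..ereal b. f x)"
    using assms by (intro interval_integral_sum) (simp add: min_def max_def)
  then show ?thesis using assms by (simp add: interval_integral_Icc)
qed

lemma is_ftc_deriv_glue:
  assumes f1: "is_ftc_deriv u1 g1" and f2: "is_ftc_deriv u2 g2" and c: "u1 c = u2 c"
  shows "is_ftc_deriv (\<lambda>x. if x \<le> c then u1 x else u2 x) (\<lambda>x. if x \<le> c then g1 x else g2 x)"
proof -
  let ?u = "\<lambda>x. if x \<le> c then u1 x else u2 x" and ?g = "\<lambda>x. if x \<le> c then g1 x else g2 x"
  have int: "set_integrable lborel {a..b} ?g" for a b
  proof -
    have "set_integrable lborel ({a..b} \<inter> {..c}) g1" "set_integrable lborel ({a..b} \<inter> {c<..}) g2"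
      by (auto intro: set_integrable_subset[OF is_ftc_derivD(1)[OF f1]]
          set_integrable_subset[OF is_ftc_derivD(1)[OF f2]])
    then have "integrable lborel (\<lambda>x. indicator ({a..b} \<inter> {..c}) x *\<^sub>R g1 x + indicator ({a..b} \<inter> {c<..}) x *\<^sub>R g2 x)"
      unfolding set_integrable_def by auto
    then show ?thesis unfolding set_integrable_def
      by (rule Bochner_Integration.integrable_cong[THEN iffD1, rotated -1]) (auto simp: indicator_def)
  qed
  have left: "?u b - ?u a = (LINT x:{a..b}|lborel. ?g x)" if "a \<le> b" "b \<le> c" for a b
  proof -
    have "(LINT x:{a..b}|lborel. ?g x) = (LINT x:{a..b}|lborel. g1 x)"
      using that by (intro set_lebesgue_integral_cong) auto
    then show ?thesis using that is_ftc_derivD(2)[OF f1] by auto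
  qed
  have right: "?u b - ?u a = (LINT x:{a..b}|lborel. ?g x)" if "a \<le> b" "c \<le> a" for a b
  proof -
    have u2: "?u x = u2 x" if "c \<le> x" for x
      using c that by (cases "x = c") auto
    have "c \<le> b" using that by linarith
    then have "?u b - ?u a = u2 b - u2 a"
      by (simp only: u2[OF that(2)] u2[OF \<open>c \<le> b\<close>])
    also have "\<dots> = (LINT x:{a..b}|lborel. g2 x)"
      using is_ftc_derivD(2)[OF f2 that(1)] .
    also have "\<dots> = (LINT x:{a..b}|lborel. ?g x)"
      unfolding set_lebesgue_integral_def
    proof (rule integral_cong_AE)
      show "(\<lambda>x. indicat_real {a..b} x *\<^sub>R g2 x) \<in> borel_measurable lborel"
        "(\<lambda>x. indicat_real {a..b} x *\<^sub>R ?g x) \<in> borel_measurable lborel"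
        using int is_ftc_derivD(1)[OF f2] by (auto simp: set_integrable_def)
      show "AE x in lborel. indicat_real {a..b} x *\<^sub>R g2 x = indicat_real {a..b} x *\<^sub>R ?g x"
        using AE_lborel_singleton[of c] by eventually_elim (use that in \<open>auto simp: indicator_def\<close>)
    qed
    finally show ?thesis .
  qed
  have "?u b - ?u a = (LINT x:{a..b}|lborel. ?g x)" if "a \<le> b" for a b
  proof (cases "b \<le> c \<or> c \<le> a")
    case True
    then show ?thesis using left right that by blast
  next
    case False
    then have "(LINT x:{a..b}|lborel. ?g x) = (LINT x:{a..c}|lborel. ?g x) + (LINT x:{c..b}|lborel. ?g x)"
      by (intro set_integral_Icc_split int) auto
    then show ?thesis using left[of a c] right[of c b] False by auto
  qed
  then show ?thesis using int unfolding is_ftc_deriv_def by blast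
qed

lemma AE_zero_if_half_line_integrals_zero:
  fixes h :: "real \<Rightarrow> real"
  assumes h: "integrable lborel h" and zero: "\<And>t. (LINT x:{t<..}|lborel. h x) = 0"
  shows "AE x in lborel. h x = 0"
proof -
  define P where "P x = ennreal (max 0 (h x))" for x
  define N where "N x = ennreal (max 0 (- h x))" for x
  have [measurable]: "h \<in> borel_measurable borel" using h by simp
  have [measurable]: "P \<in> borel_measurable borel" "N \<in> borel_measurable borel"
    unfolding P_def N_def by measurable
  have ip: "integrable lborel (\<lambda>x. max 0 (h x))" and in_: "integrable lborel (\<lambda>x. max 0 (- h x))"
    using h by (auto intro: integrable_max)
  have half_line: "emeasure (density lborel P) {t<..} = emeasure (density lborel N) {t<..}" for t
  proof -
    have a: "integrable lborel (\<lambda>x. max 0 (h x) * indicator {t<..} x)"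
      and b: "integrable lborel (\<lambda>x. max 0 (- h x) * indicator {t<..} x)"
      using ip in_ by (auto intro: integrable_real_mult_indicator)
    have "(\<integral>x. max 0 (h x) * indicator {t<..} x \<partial>lborel) - (\<integral>x. max 0 (- h x) * indicator {t<..} x \<partial>lborel)
        = (LINT x:{t<..}|lborel. h x)"
      using a b unfolding set_lebesgue_integral_def Bochner_Integration.integral_diff[OF a b, symmetric]
      by (intro Bochner_Integration.integral_cong) (auto simp: indicator_def max_def)
    then have "(\<integral>x. max 0 (h x) * indicator {t<..} x \<partial>lborel) = (\<integral>x. max 0 (- h x) * indicator {t<..} x \<partial>lborel)"
      using zero by simp
    then show ?thesis
      using nn_integral_eq_integral[OF a] nn_integral_eq_integral[OF b]
      by (simp add: emeasure_density P_def N_def ennreal_mult'' ennreal_indicator)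
  qed
  have "density lborel P = density lborel N"
  proof (rule measure_eqI_lessThan)
    show "emeasure (density lborel P) {x<..} < \<infinity>" for x
    proof -
      have "emeasure (density lborel P) {x<..} \<le> emeasure (density lborel P) UNIV"
        by (intro emeasure_mono) auto
      also have "\<dots> < \<infinity>" using ip
        by (simp add: emeasure_density P_def nn_integral_eq_integral less_top[symmetric])
      finally show ?thesis .
    qed
  qed (auto simp: half_line)
  then have "AE x in lborel. P x = N x"
    by (intro sigma_finite_measure.density_unique[OF sigma_finite_lborel]) auto
  then show ?thesis
    by eventually_elim (auto simp: P_def N_def max_def split: if_splits)
qed

lemma AE_zero_if_interval_integrals_zero:
  fixes f :: "real \<Rightarrow> real"
  assumes [measurable]: "f \<in> borel_measurable lborel"
    and int: "\<And>a b. set_integrable lborel {a..b} f"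
    and zero: "\<And>a b. a \<le> b \<Longrightarrow> (LINT x:{a..b}|lborel. f x) = 0"
  shows "AE x in lborel. f x = 0"
proof -
  have "AE x in lborel. indicator {-n..n} x * f x = 0" if "0 \<le> n" for n :: real
  proof (rule AE_zero_if_half_line_integrals_zero)
    show "integrable lborel (\<lambda>x. indicator {-n..n} x * f x)"
      using int[of "-n" n] by (simp add: set_integrable_def)
    show "(LINT x:{t<..}|lborel. indicator {-n..n} x * f x) = 0" for t
    proof (cases "t < n")
      case True
      have "(LINT x:{t<..}|lborel. indicator {-n..n} x * f x) = (LINT x:{max t (-n)..n}|lborel. f x)"
        unfolding set_lebesgue_integral_def
        using AE_lborel_singleton[of "max t (-n)"]
        by (intro integral_cong_AE) (auto simp: indicator_def elim!: eventually_mono)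
      also have "\<dots> = 0" using True that by (intro zero) auto
      finally show ?thesis .
    qed (auto simp: set_lebesgue_integral_def indicator_def intro!: integral_eq_zero_AE)
  qed
  then have "AE x in lborel. \<forall>n::nat. indicator {-real n..real n} x * f x = 0"
    by (subst AE_all_countable) auto
  then show ?thesis
  proof eventually_elim
    case (elim x)
    obtain n :: nat where "\<bar>x\<bar> \<le> real n" using real_arch_simple by blast
    with elim[rule_format, of n] show ?case by (simp add: indicator_def abs_le_iff)
  qed
qed

lemma is_H1_deriv_unique_AE:
  assumes "is_H1_deriv u g1" "is_H1_deriv u g2"
  shows "AE x in lborel. g1 x = g2 x"
proof -
  have f: "is_ftc_deriv u g1" "is_ftc_deriv u g2"
    using assms by (auto intro: is_H1_deriv_imp_is_ftc_deriv)
  have [measurable]: "g1 \<in> borel_measurable lborel" "g2 \<in> borel_measurable lborel"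
    using assms unfolding is_H1_deriv_def by auto
  have "AE x in lborel. g1 x - g2 x = 0"
  proof (rule AE_zero_if_interval_integrals_zero)
    show "set_integrable lborel {a..b} (\<lambda>x. g1 x - g2 x)" for a b
      using f by (auto intro: is_ftc_derivD)
    show "(LINT x:{a..b}|lborel. g1 x - g2 x) = 0" if "a \<le> b" for a b
      using is_ftc_derivD(2)[OF f(1) that] is_ftc_derivD(2)[OF f(2) that]
      by (subst set_integral_diff(2)) (auto intro: is_ftc_derivD(1)[OF f(1)] is_ftc_derivD(1)[OF f(2)])
  qed measurable
  then show ?thesis by auto
qed

lemma H1_deriv_is_H1_deriv: "u \<in> H1 \<Longrightarrow> is_H1_deriv u (H1_deriv u)"
  unfolding H1_def H1_deriv_def by (auto intro: someI[of "is_H1_deriv u"])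

lemma dirichlet_eq_integral_square:
  assumes "is_H1_deriv u g"
  shows "dirichlet u = (LINT x|lborel. (g x)\<^sup>2)"
proof -
  have d: "is_H1_deriv u (H1_deriv u)"
    using assms unfolding H1_deriv_def by (rule someI[of "is_H1_deriv u"])
  moreover have "H1_deriv u \<in> borel_measurable lborel" "g \<in> borel_measurable lborel"
    using d assms unfolding is_H1_deriv_def by auto
  ultimately show ?thesis using is_H1_deriv_unique_AE[OF d assms]
    unfolding dirichlet_def by (intro integral_cong_AE) (auto elim: AE_mp)
qed

lemma dirichlet_nonneg: "0 \<le> dirichlet u"
  unfolding dirichlet_def by simp

lemma H1_increment_le:
  assumes "is_H1_deriv u g" "x \<le> y"
  shows "\<bar>u y - u x\<bar> \<le> (y - x) + (LINT t|lborel. (g t)\<^sup>2)"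
proof -
  have [measurable]: "g \<in> borel_measurable lborel" and gi: "integrable lborel (\<lambda>t. (g t)\<^sup>2)"
    using assms(1) unfolding is_H1_deriv_def by auto
  have gxy: "set_integrable lborel {x..y} g"
    using is_ftc_derivD(1)[OF is_H1_deriv_imp_is_ftc_deriv[OF assms(1)]] .
  have "\<bar>u y - u x\<bar> = \<bar>LINT t:{x..y}|lborel. g t\<bar>"
    using is_ftc_derivD(2)[OF is_H1_deriv_imp_is_ftc_deriv[OF assms(1)] assms(2)] by simp
  also have "\<dots> \<le> (LINT t|lborel. indicator {x..y} t * \<bar>g t\<bar>)"
    using set_integral_norm_bound[OF gxy] by (simp add: set_lebesgue_integral_def)
  also have "\<dots> \<le> (LINT t|lborel. indicator {x..y} t + (g t)\<^sup>2)"
  proof (rule integral_mono)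
    show "integrable lborel (\<lambda>t. indicat_real {x..y} t * \<bar>g t\<bar>)"
      using integrable_abs[OF gxy[unfolded set_integrable_def]] by (simp add: abs_mult)
    show "integrable lborel (\<lambda>t. indicat_real {x..y} t + (g t)\<^sup>2)"
      using gi integrable_Icc_indicator by (rule Bochner_Integration.integrable_add[rotated])
    show "indicat_real {x..y} t * \<bar>g t\<bar> \<le> indicat_real {x..y} t + (g t)\<^sup>2" for t
      using abs_le_one_plus_square[of "g t"] by (simp add: indicator_def)
  qed
  also have "\<dots> = (y - x) + (LINT t|lborel. (g t)\<^sup>2)"
    using gi integrable_Icc_indicator assms(2)
    by (subst Bochner_Integration.integral_add) (auto simp: emeasure_lborel_Icc_eq)
  finally show ?thesis .
qed

lemma H1_bounded:
  assumes "u \<in> H1"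
  shows "\<exists>C. \<forall>x. \<bar>u x\<bar> \<le> C"
proof -
  obtain g where [measurable]: "u \<in> borel_measurable lborel"
    and ui: "integrable lborel (\<lambda>x. (u x)\<^sup>2)" and g: "is_H1_deriv u g"
    using assms unfolding H1_def by auto
  define K where "K = 1 + (LINT t|lborel. (g t)\<^sup>2)"
  define S where "S = (LINT t|lborel. (u t)\<^sup>2)"
  have "\<bar>u x\<bar> \<le> K + sqrt S" for x
  proof (cases "\<bar>u x\<bar> \<le> K")
    case False
    \<comment> \<open>\<open>\<bar>u\<bar> \<ge> \<bar>u x\<bar> - K > 0\<close> on \<open>[x, x + 1]\<close>, so \<open>(\<bar>u x\<bar> - K)\<^sup>2\<close> is at most the \<open>L\<^sup>2\<close> mass\<close>
    have "(\<bar>u x\<bar> - K)\<^sup>2 = (LINT t|lborel. indicator {x..x+1} t * (\<bar>u x\<bar> - K)\<^sup>2)"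
      by (simp add: emeasure_lborel_Icc_eq)
    also have "\<dots> \<le> S"
      unfolding S_def
    proof (rule integral_mono)
      show "integrable lborel (\<lambda>t. indicat_real {x..x+1} t * (\<bar>u x\<bar> - K)\<^sup>2)"
        using integrable_Icc_indicator by (rule integrable_mult_left)
      show "indicat_real {x..x+1} t * (\<bar>u x\<bar> - K)\<^sup>2 \<le> (u t)\<^sup>2" for t
      proof (cases "t \<in> {x..x+1}")
        case True
        then have "\<bar>u t - u x\<bar> \<le> K"
          using H1_increment_le[OF g, of x t] by (simp add: K_def)
        then have "(\<bar>u x\<bar> - K)\<^sup>2 \<le> \<bar>u t\<bar>\<^sup>2" using False by (intro power_mono) auto
        then show ?thesis using True by simp
      qed simp
    qed (rule ui)
    finally have "\<bar>u x\<bar> - K \<le> sqrt S" by (rule real_le_rsqrt)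
    then show ?thesis by simp
  qed (simp add: S_def add_increasing2)
  then show ?thesis by blast
qed

lemma abs_le_sup_norm:
  assumes "u \<in> H1"
  shows "\<bar>u x\<bar> \<le> sup_norm u"
proof -
  obtain C where "\<forall>x. \<bar>u x\<bar> \<le> C" using H1_bounded[OF assms] by blast
  then have "bdd_above (range (\<lambda>x. \<bar>u x\<bar>))" by (auto intro: bdd_aboveI2)
  then show ?thesis unfolding sup_norm_def by (intro cSup_upper) auto
qed

lemma sup_norm_eq_one:
  assumes "\<And>x. \<bar>w x\<bar> \<le> 1" and "w a = 1"
  shows "sup_norm w = 1"
  unfolding sup_norm_def
proof (rule cSup_eq_maximum)
  show "1 \<in> range (\<lambda>x. \<bar>w x\<bar>)" using assms(2) by (auto intro!: image_eqI[of _ _ a])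
qed (use assms(1) in auto)

section \<open>Local modifications and cut-offs\<close>

lemma integrable_mult_if_AE_bounded:
  fixes V f :: "real \<Rightarrow> real"
  assumes [measurable]: "V \<in> borel_measurable lborel" and "AE x in lborel. \<bar>V x\<bar> \<le> B"
    and f: "integrable lborel f"
  shows "integrable lborel (\<lambda>x. V x * f x)"
proof (rule Bochner_Integration.integrable_bound)
  show "integrable lborel (\<lambda>x. B * f x)" using f by simp
  show "AE x in lborel. norm (V x * f x) \<le> norm (B * f x)"
    using assms(2) by eventually_elim (auto simp: abs_mult intro: mult_right_mono)
qed (use f in measurable)

lemma integrable_square_if_dominated:
  fixes f h :: "real \<Rightarrow> real"
  assumes [measurable]: "f \<in> borel_measurable lborel" and "integrable lborel h"
    and "\<And>x. (f x)\<^sup>2 \<le> h x"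
  shows "integrable lborel (\<lambda>x. (f x)\<^sup>2)"
  using assms(2) by (rule Bochner_Integration.integrable_bound)
    (use assms(3) in \<open>auto intro: order_trans[OF _ abs_ge_self]\<close>)

lemma H1_if_square_dominated:
  assumes u: "u \<in> H1" "is_H1_deriv u g" and h: "integrable lborel h"
    and w: "is_ftc_deriv w d" and [measurable]: "w \<in> borel_measurable lborel" "d \<in> borel_measurable lborel"
    and bw: "\<And>x. (w x)\<^sup>2 \<le> (u x)\<^sup>2 + h x" and bd: "\<And>x. (d x)\<^sup>2 \<le> (g x)\<^sup>2 + h x"
  shows "w \<in> H1" "is_H1_deriv w d"
proof -
  have "integrable lborel (\<lambda>x. (u x)\<^sup>2)" "integrable lborel (\<lambda>x. (g x)\<^sup>2)"
    using u unfolding H1_def is_H1_deriv_def by auto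
  then have "integrable lborel (\<lambda>x. (w x)\<^sup>2)" "integrable lborel (\<lambda>x. (d x)\<^sup>2)"
    using h integrable_square_if_dominated[of w "\<lambda>x. (u x)\<^sup>2 + h x"]
      integrable_square_if_dominated[of d "\<lambda>x. (g x)\<^sup>2 + h x"] bw bd by auto
  then show "is_H1_deriv w d"
    using w unfolding is_H1_deriv_def is_ftc_deriv_def by auto
  then show "w \<in> H1"
    using \<open>integrable lborel (\<lambda>x. (w x)\<^sup>2)\<close> unfolding H1_def by auto
qed

lemma Ifun_le_if_square_dominated:
  fixes V :: "real \<Rightarrow> real"
  assumes [measurable]: "V \<in> borel_measurable lborel" and VB: "AE x in lborel. 0 \<le> V x \<and> V x \<le> B"
    and u: "u \<in> H1" "is_H1_deriv u g" and w: "w \<in> H1" "is_H1_deriv w d"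
    and h: "integrable lborel h" "\<And>x. 0 \<le> h x"
    and bw: "\<And>x. (w x)\<^sup>2 \<le> (u x)\<^sup>2 + h x" and bd: "\<And>x. (d x)\<^sup>2 \<le> (g x)\<^sup>2 + h x"
  shows "Ifun (fun_form V) w \<le> Ifun (fun_form V) u + (1 + B) * (LINT x|lborel. h x)"
proof -
  have VB': "AE x in lborel. \<bar>V x\<bar> \<le> B" using VB by eventually_elim auto
  have gi: "integrable lborel (\<lambda>x. (g x)\<^sup>2)" and di: "integrable lborel (\<lambda>x. (d x)\<^sup>2)"
    and ui: "integrable lborel (\<lambda>x. (u x)\<^sup>2)" and wi: "integrable lborel (\<lambda>x. (w x)\<^sup>2)"
    using u w unfolding H1_def is_H1_deriv_def by auto
  have "dirichlet w \<le> (LINT x|lborel. (g x)\<^sup>2 + h x)"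
    unfolding dirichlet_eq_integral_square[OF w(2)] using gi di h bd by (intro integral_mono) auto
  then have D: "dirichlet w \<le> dirichlet u + (LINT x|lborel. h x)"
    using gi h by (simp add: dirichlet_eq_integral_square[OF u(2)])
  have "fun_form V w \<le> (LINT x|lborel. V x * (u x)\<^sup>2 + B * h x)"
    unfolding fun_form_def
  proof (rule integral_mono_AE)
    show "integrable lborel (\<lambda>x. V x * (w x)\<^sup>2)" by (rule integrable_mult_if_AE_bounded[OF _ VB' wi]) simp
    show "integrable lborel (\<lambda>x. V x * (u x)\<^sup>2 + B * h x)"
      using integrable_mult_if_AE_bounded[OF _ VB' ui] h by simp
    show "AE x in lborel. V x * (w x)\<^sup>2 \<le> V x * (u x)\<^sup>2 + B * h x"
      using VB
    proof eventually_elim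
      case (elim x)
      have "V x * (w x)\<^sup>2 \<le> V x * ((u x)\<^sup>2 + h x)"
        using elim bw[of x] by (intro mult_left_mono) auto
      also have "\<dots> \<le> V x * (u x)\<^sup>2 + B * h x"
        using elim h(2)[of x] by (simp add: distrib_left mult_right_mono)
      finally show ?case .
    qed
  qed
  then have F: "fun_form V w \<le> fun_form V u + B * (LINT x|lborel. h x)"
    using integrable_mult_if_AE_bounded[OF _ VB' ui] h by (simp add: fun_form_def)
  show ?thesis using D F unfolding Ifun_def by (simp add: algebra_simps)
qed

definition cut_below :: "(real \<Rightarrow> real) \<Rightarrow> real \<Rightarrow> real \<Rightarrow> real" where
  "cut_below u c = (\<lambda>x. if x \<le> c then (if x \<le> c - 1 then 0 else u c * (x - (c - 1))) else u x)"

definition cut_below_deriv :: "(real \<Rightarrow> real) \<Rightarrow> (real \<Rightarrow> real) \<Rightarrow> real \<Rightarrow> real \<Rightarrow> real" where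
  "cut_below_deriv u g c = (\<lambda>x. if x \<le> c then (if x \<le> c - 1 then 0 else u c) else g x)"

definition cut_above :: "(real \<Rightarrow> real) \<Rightarrow> real \<Rightarrow> real \<Rightarrow> real" where
  "cut_above u c = (\<lambda>x. if x \<le> c then u x else (if x \<le> c + 1 then - u c * (x - (c + 1)) else 0))"

definition cut_above_deriv :: "(real \<Rightarrow> real) \<Rightarrow> (real \<Rightarrow> real) \<Rightarrow> real \<Rightarrow> real \<Rightarrow> real" where
  "cut_above_deriv u g c = (\<lambda>x. if x \<le> c then g x else (if x \<le> c + 1 then - u c else 0))"

lemma is_ftc_deriv_cut_below:
  "is_ftc_deriv u g \<Longrightarrow> is_ftc_deriv (cut_below u c) (cut_below_deriv u g c)"
  unfolding cut_below_def cut_below_deriv_def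
  by (intro is_ftc_deriv_glue is_ftc_deriv_const is_ftc_deriv_affine) auto

lemma is_ftc_deriv_cut_above:
  "is_ftc_deriv u g \<Longrightarrow> is_ftc_deriv (cut_above u c) (cut_above_deriv u g c)"
  unfolding cut_above_def cut_above_deriv_def
  by (intro is_ftc_deriv_glue is_ftc_deriv_const is_ftc_deriv_affine) auto

lemma cut_below_measurable [measurable]:
  assumes [measurable]: "u \<in> borel_measurable lborel" "g \<in> borel_measurable lborel"
  shows "cut_below u c \<in> borel_measurable lborel" "cut_below_deriv u g c \<in> borel_measurable lborel"
  unfolding cut_below_def cut_below_deriv_def by measurable

lemma cut_above_measurable [measurable]:
  assumes [measurable]: "u \<in> borel_measurable lborel" "g \<in> borel_measurable lborel"
  shows "cut_above u c \<in> borel_measurable lborel" "cut_above_deriv u g c \<in> borel_measurable lborel"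
  unfolding cut_above_def cut_above_deriv_def by measurable

lemma abs_mult_unit_interval_le: "0 \<le> t \<Longrightarrow> t \<le> 1 \<Longrightarrow> \<bar>y * t\<bar> \<le> \<bar>y::real\<bar>"
  by (simp add: abs_mult mult_left_le)

lemma square_mult_unit_interval_le: "0 \<le> t \<Longrightarrow> t \<le> 1 \<Longrightarrow> (y * t)\<^sup>2 \<le> (y::real)\<^sup>2"
  using abs_mult_unit_interval_le[of t y] by (metis abs_ge_zero power2_abs power_mono)

lemma cut_below_bounds:
  "(cut_below u c x)\<^sup>2 \<le> (u x)\<^sup>2 + (u c)\<^sup>2 * indicator {c-1..c} x"
  "(cut_below_deriv u g c x)\<^sup>2 \<le> (g x)\<^sup>2 + (u c)\<^sup>2 * indicator {c-1..c} x"
  "(\<And>y. \<bar>u y\<bar> \<le> 1) \<Longrightarrow> \<bar>cut_below u c x\<bar> \<le> 1"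
  unfolding cut_below_def cut_below_deriv_def
  using square_mult_unit_interval_le[of "x - (c - 1)" "u c"] abs_mult_unit_interval_le[of "x - (c - 1)" "u c"]
  by (auto simp: indicator_def intro: add_increasing order_trans[of _ "\<bar>u c\<bar>"])

lemma cut_above_bounds:
  "(cut_above u c x)\<^sup>2 \<le> (u x)\<^sup>2 + (u c)\<^sup>2 * indicator {c..c+1} x"
  "(cut_above_deriv u g c x)\<^sup>2 \<le> (g x)\<^sup>2 + (u c)\<^sup>2 * indicator {c..c+1} x"
  "(\<And>y. \<bar>u y\<bar> \<le> 1) \<Longrightarrow> \<bar>cut_above u c x\<bar> \<le> 1"
proof -
  have ramp: "- u c * (x - (c + 1)) = u c * ((c + 1) - x)" by (simp add: algebra_simps)
  show "(cut_above u c x)\<^sup>2 \<le> (u x)\<^sup>2 + (u c)\<^sup>2 * indicator {c..c+1} x"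
    "(cut_above_deriv u g c x)\<^sup>2 \<le> (g x)\<^sup>2 + (u c)\<^sup>2 * indicator {c..c+1} x"
    "(\<And>y. \<bar>u y\<bar> \<le> 1) \<Longrightarrow> \<bar>cut_above u c x\<bar> \<le> 1"
    unfolding cut_above_def cut_above_deriv_def ramp
    using square_mult_unit_interval_le[of "(c + 1) - x" "u c"] abs_mult_unit_interval_le[of "(c + 1) - x" "u c"]
    by (auto simp: indicator_def intro: add_increasing order_trans[of _ "\<bar>u c\<bar>"])
qed

lemma H1_cut_below:
  assumes "u \<in> H1"
  shows "cut_below u c \<in> H1" "is_H1_deriv (cut_below u c) (cut_below_deriv u (H1_deriv u) c)"
proof -
  have g: "is_H1_deriv u (H1_deriv u)" by (rule H1_deriv_is_H1_deriv[OF assms])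
  have [measurable]: "u \<in> borel_measurable lborel" "H1_deriv u \<in> borel_measurable lborel"
    using assms g unfolding H1_def is_H1_deriv_def by auto
  note dominated = H1_if_square_dominated[OF assms g integrable_mult_right[OF integrable_Icc_indicator[of "c - 1" c]]
      is_ftc_deriv_cut_below[OF is_H1_deriv_imp_is_ftc_deriv[OF g]] _ _ cut_below_bounds(1) cut_below_bounds(2)]
  show "cut_below u c \<in> H1" by (rule dominated(1); measurable)
  show "is_H1_deriv (cut_below u c) (cut_below_deriv u (H1_deriv u) c)" by (rule dominated(2); measurable)
qed

lemma H1_cut_above:
  assumes "u \<in> H1"
  shows "cut_above u c \<in> H1" "is_H1_deriv (cut_above u c) (cut_above_deriv u (H1_deriv u) c)"
proof -
  have g: "is_H1_deriv u (H1_deriv u)" by (rule H1_deriv_is_H1_deriv[OF assms])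
  have [measurable]: "u \<in> borel_measurable lborel" "H1_deriv u \<in> borel_measurable lborel"
    using assms g unfolding H1_def is_H1_deriv_def by auto
  note dominated = H1_if_square_dominated[OF assms g integrable_mult_right[OF integrable_Icc_indicator[of c "c + 1"]]
      is_ftc_deriv_cut_above[OF is_H1_deriv_imp_is_ftc_deriv[OF g]] _ _ cut_above_bounds(1) cut_above_bounds(2)]
  show "cut_above u c \<in> H1" by (rule dominated(1); measurable)
  show "is_H1_deriv (cut_above u c) (cut_above_deriv u (H1_deriv u) c)" by (rule dominated(2); measurable)
qed

lemma Ifun_cut_below_le:
  fixes V :: "real \<Rightarrow> real"
  assumes "V \<in> borel_measurable lborel" "AE x in lborel. 0 \<le> V x \<and> V x \<le> B" and "u \<in> H1"
  shows "Ifun (fun_form V) (cut_below u c) \<le> Ifun (fun_form V) u + (1 + B) * (u c)\<^sup>2"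
  using Ifun_le_if_square_dominated[OF assms(1,2,3) H1_deriv_is_H1_deriv[OF assms(3)] H1_cut_below[OF assms(3)],
      of "\<lambda>x. (u c)\<^sup>2 * indicator {c-1..c} x"] integrable_Icc_indicator cut_below_bounds(1,2)
  by (simp add: emeasure_lborel_Icc_eq)

lemma Ifun_cut_above_le:
  fixes V :: "real \<Rightarrow> real"
  assumes "V \<in> borel_measurable lborel" "AE x in lborel. 0 \<le> V x \<and> V x \<le> B" and "u \<in> H1"
  shows "Ifun (fun_form V) (cut_above u c) \<le> Ifun (fun_form V) u + (1 + B) * (u c)\<^sup>2"
  using Ifun_le_if_square_dominated[OF assms(1,2,3) H1_deriv_is_H1_deriv[OF assms(3)] H1_cut_above[OF assms(3)],
      of "\<lambda>x. (u c)\<^sup>2 * indicator {c..c+1} x"] integrable_Icc_indicator cut_above_bounds(1,2)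
  by (simp add: emeasure_lborel_Icc_eq)

lemma Kset_abs_le_one: "u \<in> Kset a \<Longrightarrow> \<bar>u x\<bar> \<le> 1"
  unfolding Kset_def using abs_le_sup_norm by fastforce

lemma cut_below_in_Kset:
  assumes "u \<in> Kset a" "c < a"
  shows "cut_below u c \<in> Kset a"
proof -
  have "cut_below u c a = 1" using assms unfolding Kset_def cut_below_def by auto
  moreover have "\<bar>cut_below u c x\<bar> \<le> 1" for x
    using cut_below_bounds(3) Kset_abs_le_one[OF assms(1)] by blast
  ultimately show ?thesis
    using assms H1_cut_below sup_norm_eq_one unfolding Kset_def by blast
qed

lemma cut_above_in_Kset:
  assumes "u \<in> Kset a" "a \<le> c"
  shows "cut_above u c \<in> Kset a"
proof -
  have "cut_above u c a = 1" using assms unfolding Kset_def cut_above_def by auto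
  moreover have "\<bar>cut_above u c x\<bar> \<le> 1" for x
    using cut_above_bounds(3) Kset_abs_le_one[OF assms(1)] by blast
  ultimately show ?thesis
    using assms H1_cut_above sup_norm_eq_one unfolding Kset_def by blast
qed

lemma Kset_nonempty: "Kset a \<noteq> {}"
proof -
  \<comment> \<open>the tent of height 1 over \<open>[a - 1, a + 1]\<close>\<close>
  define w where "w = cut_above (cut_below (\<lambda>x. 1) a) a"
  define d where "d = cut_above_deriv (cut_below (\<lambda>x. 1) a) (cut_below_deriv (\<lambda>x. 1) (\<lambda>x. 0) a) a"
  have zero: "is_H1_deriv (\<lambda>x. 0) (\<lambda>x. 0)"
    unfolding is_H1_deriv_def by (simp add: set_lebesgue_integral_def)
  then have "(\<lambda>x. 0) \<in> H1" unfolding H1_def by auto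
  have "w \<in> H1"
  proof (rule H1_if_square_dominated(1)[OF \<open>(\<lambda>x. 0) \<in> H1\<close> zero integrable_Icc_indicator[of "a - 1" "a + 1"]])
    show "is_ftc_deriv w d"
      unfolding w_def d_def by (intro is_ftc_deriv_cut_above is_ftc_deriv_cut_below is_ftc_deriv_const)
    show "w \<in> borel_measurable lborel" "d \<in> borel_measurable lborel"
      unfolding w_def d_def by measurable
    show "(w x)\<^sup>2 \<le> 0\<^sup>2 + indicator {a - 1..a + 1} x" "(d x)\<^sup>2 \<le> 0\<^sup>2 + indicator {a - 1..a + 1} x" for x
      unfolding w_def d_def cut_above_def cut_below_def cut_above_deriv_def cut_below_deriv_def
      by (auto simp: indicator_def power2_eq_square mult_le_one)
  qed
  moreover have "w a = 1" "\<bar>w x\<bar> \<le> 1" for x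
    unfolding w_def cut_above_def cut_below_def by auto
  ultimately have "w \<in> Kset a" unfolding Kset_def using sup_norm_eq_one by blast
  then show ?thesis by blast
qed

lemma exists_Kset_Ifun_less:
  assumes "Ffun a Q < t"
  shows "\<exists>u\<in>Kset a. Ifun Q u < t"
  using cInf_lessD[of "Ifun Q ` Kset a" t] assms Kset_nonempty unfolding Ffun_def by auto

section \<open>The perturbation is small far out\<close>

lemma abs_mult_square_le_powr:
  fixes m d p y :: real
  assumes "0 < d" "1 \<le> p" "y\<^sup>2 \<le> 1"
  shows "\<bar>m\<bar> * y\<^sup>2 \<le> d * y\<^sup>2 + (d / d powr p) * \<bar>m\<bar> powr p"
proof (cases "\<bar>m\<bar> \<le> d")
  case True
  then have "\<bar>m\<bar> * y\<^sup>2 \<le> d * y\<^sup>2" by (intro mult_right_mono) auto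
  moreover have "0 \<le> (d / d powr p) * \<bar>m\<bar> powr p" using assms by simp
  ultimately show ?thesis by linarith
next
  case False
  then have m_d: "1 \<le> \<bar>m\<bar> / d" using assms by simp
  have "\<bar>m\<bar> * y\<^sup>2 \<le> d * (\<bar>m\<bar> / d)"
    using assms by (simp add: mult_left_le)
  also have "\<dots> \<le> d * (\<bar>m\<bar> / d) powr p"
    using powr_mono[OF assms(2) m_d] m_d assms(1) by (intro mult_left_mono) (auto simp: powr_one)
  also have "\<dots> = (d / d powr p) * \<bar>m\<bar> powr p" by (simp add: powr_divide)
  finally show ?thesis using assms by (simp add: add_increasing)
qed

lemma tendsto_tail_integral_zero:
  fixes f :: "real \<Rightarrow> real"
  assumes "integrable lborel f"
  shows "((\<lambda>t. LINT x|lborel. f x * indicator {x. t < \<bar>x\<bar>} x) \<longlongrightarrow> 0) at_top"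
proof -
  have [measurable]: "f \<in> borel_measurable lborel" using assms by simp
  have "AE x in lborel. ((\<lambda>t. f x * indicator {x. t < \<bar>x\<bar>} x) \<longlongrightarrow> 0) at_top"
  proof (rule AE_I2)
    fix x :: real
    have "\<forall>\<^sub>F t in at_top. f x * indicator {x. t < \<bar>x\<bar>} x = 0"
      using eventually_ge_at_top[of "\<bar>x\<bar>"] by eventually_elim (auto simp: indicator_def)
    then show "((\<lambda>t. f x * indicator {x. t < \<bar>x\<bar>} x) \<longlongrightarrow> 0) at_top"
      by (rule tendsto_eventually)
  qed
  moreover have "\<forall>\<^sub>F t in at_top. AE x in lborel. norm (f x * indicator {x. t < \<bar>x\<bar>} x) \<le> \<bar>f x\<bar>"
    by (intro always_eventually allI AE_I2) (auto simp: indicator_def)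
  ultimately show ?thesis
    using integral_dominated_convergence_at_top[of "\<lambda>x. 0" lborel "\<lambda>t x. f x * indicator {x. t < \<bar>x\<bar>} x"
        "\<lambda>x. \<bar>f x\<bar>"] assms by simp
qed

lemma fun_form_small_far_out:
  fixes W :: "real \<Rightarrow> real" and p S \<epsilon> :: real
  assumes [measurable]: "W \<in> borel_measurable lborel"
    and W_Lp: "integrable lborel (\<lambda>x. \<bar>W x\<bar> powr p)" and p: "1 \<le> p"
    and S: "0 \<le> S" and \<epsilon>: "0 < \<epsilon>"
  shows "\<exists>R. \<forall>w\<in>H1. (\<forall>x. \<bar>w x\<bar> \<le> 1) \<longrightarrow> (\<forall>x. \<bar>x\<bar> \<le> R \<longrightarrow> w x = 0) \<longrightarrow>
            (LINT x|lborel. (w x)\<^sup>2) \<le> S \<longrightarrow> fun_form W w \<le> \<epsilon>"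
proof -
  define d where "d = \<epsilon> / (2 * (S + 1))"
  have d: "0 < d" "d * S \<le> \<epsilon> / 2" using \<epsilon> S by (auto simp: d_def field_simps)
  define K where "K = d / d powr p"
  define T where "T t = (LINT x|lborel. \<bar>W x\<bar> powr p * indicator {x. t < \<bar>x\<bar>} x)" for t
  have "((\<lambda>t. K * T t) \<longlongrightarrow> K * 0) at_top"
    unfolding T_def by (intro tendsto_mult tendsto_const tendsto_tail_integral_zero W_Lp)
  then have "\<forall>\<^sub>F t in at_top. K * T t < \<epsilon> / 2"
    using \<epsilon> by (intro order_tendstoD) auto
  then obtain R where R: "K * T R < \<epsilon> / 2"
    by (auto simp: eventually_at_top_linorder)
  show ?thesis
  proof (intro exI[of _ R] ballI impI)
    fix w assume w: "w \<in> H1" and w1: "\<forall>x. \<bar>w x\<bar> \<le> 1" and w0: "\<forall>x. \<bar>x\<bar> \<le> R \<longrightarrow> w x = 0"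
      and wS: "(LINT x|lborel. (w x)\<^sup>2) \<le> S"
    have [measurable]: "w \<in> borel_measurable lborel" and wi: "integrable lborel (\<lambda>x. (w x)\<^sup>2)"
      using w unfolding H1_def by auto
    define b where "b x = d * (w x)\<^sup>2 + K * (\<bar>W x\<bar> powr p * indicator {x. R < \<bar>x\<bar>} x)" for x
    have bi: "integrable lborel b"
      unfolding b_def using wi W_Lp
      by (intro Bochner_Integration.integrable_add integrable_mult_right integrable_real_mult_indicator) auto
    have pointwise: "\<bar>W x\<bar> * (w x)\<^sup>2 \<le> b x" for x
    proof (cases "R < \<bar>x\<bar>")
      case True
      have "(w x)\<^sup>2 \<le> 1" using w1 by (simp add: abs_le_square_iff[of _ 1, simplified])
      then show ?thesis
        using True abs_mult_square_le_powr[OF d(1) p] by (simp add: b_def K_def)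
    next
      case False
      then show ?thesis using w0 d(1) by (simp add: b_def K_def)
    qed
    have Wwi: "integrable lborel (\<lambda>x. W x * (w x)\<^sup>2)"
      using bi by (rule Bochner_Integration.integrable_bound)
        (use pointwise in \<open>auto simp: abs_mult intro: order_trans[OF _ abs_ge_self]\<close>)
    have "fun_form W w \<le> (LINT x|lborel. b x)"
      unfolding fun_form_def using Wwi bi pointwise
      by (intro integral_mono) (auto intro: order_trans[OF mult_right_mono[OF abs_ge_self]])
    also have "\<dots> = d * (LINT x|lborel. (w x)\<^sup>2) + K * T R"
      unfolding b_def T_def using wi W_Lp
      by (subst Bochner_Integration.integral_add) (auto intro!: integrable_real_mult_indicator)
    also have "\<dots> \<le> \<epsilon>" using wS d R mult_left_mono[OF wS less_imp_le[OF d(1)]] by linarith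
    finally show "fun_form W w \<le> \<epsilon>" .
  qed
qed

lemma meas_form_small_far_out:
  fixes \<nu> :: "real measure"
  assumes sets: "sets \<nu> = sets borel" and "finite_measure \<nu>" and \<epsilon>: "0 < \<epsilon>"
  shows "\<exists>R. \<forall>w. w \<in> borel_measurable borel \<longrightarrow> (\<forall>x. \<bar>w x\<bar> \<le> 1) \<longrightarrow>
            (\<forall>x. \<bar>x\<bar> \<le> R \<longrightarrow> w x = 0) \<longrightarrow> meas_form \<nu> w \<le> \<epsilon>"
proof -
  interpret finite_measure \<nu> by fact
  define A where "A n = {x::real. real n < \<bar>x\<bar>}" for n :: nat
  have A_sets: "A n \<in> sets \<nu>" for n unfolding sets A_def by auto
  have "x \<notin> (\<Inter>n. A n)" for x
  proof -
    obtain n :: nat where "\<bar>x\<bar> \<le> real n" using real_arch_simple by blast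
    then show ?thesis unfolding A_def by (auto simp: not_less intro!: exI[of _ n])
  qed
  then have "(\<Inter>n. A n) = {}" by blast
  moreover have "decseq A" unfolding A_def decseq_def by auto
  then have "(\<lambda>n. measure \<nu> (A n)) \<longlonglongrightarrow> measure \<nu> (\<Inter>n. A n)"
    using A_sets by (intro finite_Lim_measure_decseq) auto
  ultimately have "(\<lambda>n. measure \<nu> (A n)) \<longlonglongrightarrow> 0" by simp
  then have "\<forall>\<^sub>F n in sequentially. measure \<nu> (A n) < \<epsilon>"
    using \<epsilon> by (intro order_tendstoD(2)) auto
  then obtain n where n: "measure \<nu> (A n) < \<epsilon>"
    by (auto simp: eventually_sequentially)
  show ?thesis
  proof (intro exI[of _ "real n"] allI impI)
    fix w :: "real \<Rightarrow> real" assume wm: "w \<in> borel_measurable borel" and w1: "\<forall>x. \<bar>w x\<bar> \<le> 1"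
      and w0: "\<forall>x. \<bar>x\<bar> \<le> real n \<longrightarrow> w x = 0"
    have [measurable]: "w \<in> borel_measurable \<nu>" using wm measurable_cong_sets[OF sets refl] by blast
    have w21: "(w x)\<^sup>2 \<le> 1" for x using w1 by (simp add: abs_le_square_iff[of _ 1, simplified])
    have "meas_form \<nu> w \<le> (\<integral>x. indicator (A n) x \<partial>\<nu>)"
      unfolding meas_form_def
    proof (rule integral_mono)
      show "integrable \<nu> (\<lambda>x. (w x)\<^sup>2)" by (rule integrable_const_bound[where B=1]) (use w21 in auto)
      show "integrable \<nu> (indicat_real (A n))"
        using A_sets by (intro integrable_real_indicator) (auto simp: emeasure_eq_measure)
      show "(w x)\<^sup>2 \<le> indicat_real (A n) x" for x
        using w21[of x] w0 by (cases "x \<in> A n") (auto simp: A_def)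
    qed
    also have "\<dots> = measure \<nu> (A n)" using A_sets by simp
    finally show "meas_form \<nu> w \<le> \<epsilon>" using n by simp
  qed
qed

lemma meas_form_nonneg: "0 \<le> meas_form \<nu> u"
  unfolding meas_form_def by simp

lemma perturbation_small_far_out:
  fixes \<mu>0 :: "real \<Rightarrow> real" and \<nu>p \<nu>n :: "real measure"
  assumes "\<mu>0 \<in> borel_measurable lborel" "integrable lborel (\<lambda>x. \<bar>\<mu>0 x\<bar> powr p)" "1 \<le> p"
    and "sets \<nu>p = sets borel" "finite_measure \<nu>p"
    and "0 \<le> S" "0 < \<epsilon>"
  shows "\<exists>R. \<forall>w\<in>H1. (\<forall>x. \<bar>w x\<bar> \<le> 1) \<longrightarrow> (\<forall>x. \<bar>x\<bar> \<le> R \<longrightarrow> w x = 0) \<longrightarrow>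
            (LINT x|lborel. (w x)\<^sup>2) \<le> S \<longrightarrow>
            fun_form \<mu>0 w + meas_form \<nu>p w - meas_form \<nu>n w \<le> \<epsilon>"
proof -
  obtain R1 where R1: "\<forall>w\<in>H1. (\<forall>x. \<bar>w x\<bar> \<le> 1) \<longrightarrow> (\<forall>x. \<bar>x\<bar> \<le> R1 \<longrightarrow> w x = 0) \<longrightarrow>
      (LINT x|lborel. (w x)\<^sup>2) \<le> S \<longrightarrow> fun_form \<mu>0 w \<le> \<epsilon> / 2"
    using fun_form_small_far_out[OF assms(1-3,6), of "\<epsilon> / 2"] assms(7) by auto
  obtain R2 where R2: "\<forall>w. w \<in> borel_measurable borel \<longrightarrow> (\<forall>x. \<bar>w x\<bar> \<le> 1) \<longrightarrow>
      (\<forall>x. \<bar>x\<bar> \<le> R2 \<longrightarrow> w x = 0) \<longrightarrow> meas_form \<nu>p w \<le> \<epsilon> / 2"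
    using meas_form_small_far_out[OF assms(4,5), of "\<epsilon> / 2"] assms(7) by auto
  show ?thesis
  proof (intro exI[of _ "max R1 R2"] ballI impI)
    fix w assume "w \<in> H1" "\<forall>x. \<bar>w x\<bar> \<le> 1" "\<forall>x. \<bar>x\<bar> \<le> max R1 R2 \<longrightarrow> w x = 0"
      "(LINT x|lborel. (w x)\<^sup>2) \<le> S"
    moreover have "w \<in> borel_measurable borel" using \<open>w \<in> H1\<close> unfolding H1_def by auto
    ultimately have "fun_form \<mu>0 w \<le> \<epsilon> / 2" "meas_form \<nu>p w \<le> \<epsilon> / 2"
      using R1 R2 by auto
    then show "fun_form \<mu>0 w + meas_form \<nu>p w - meas_form \<nu>n w \<le> \<epsilon>"
      using meas_form_nonneg[of \<nu>n w] by linarith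
  qed
qed

lemma mval_le_ratio:
  assumes "\<And>v. v \<in> H1 \<Longrightarrow> 0 \<le> Ifun Q v" and "u \<in> H1" "u \<noteq> (\<lambda>x. 0)"
  shows "mval Q \<le> Ifun Q u / (sup_norm u)\<^sup>2"
  unfolding mval_def using assms by (intro cInf_lower) (auto intro!: bdd_belowI[of _ 0])

lemma mval_nonneg:
  assumes "\<And>v. v \<in> H1 \<Longrightarrow> 0 \<le> Ifun Q v"
  shows "0 \<le> mval Q"
proof -
  obtain u where "u \<in> Kset 0" using Kset_nonempty by blast
  then have "u \<in> H1" "u \<noteq> (\<lambda>x. 0)" unfolding Kset_def by auto
  then show ?thesis
    unfolding mval_def using assms by (intro cInf_greatest) auto
qed

lemma mval_eq_if_approximable:
  assumes nonneg: "\<And>u. u \<in> H1 \<Longrightarrow> 0 \<le> Ifun Q u" and le: "\<And>u. u \<in> H1 \<Longrightarrow> Q u \<le> Q' u"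
    and approx: "\<And>\<epsilon>. 0 < \<epsilon> \<Longrightarrow> \<exists>w\<in>H1. w \<noteq> (\<lambda>x. 0) \<and> Ifun Q' w / (sup_norm w)\<^sup>2 \<le> mval Q + \<epsilon>"
  shows "mval Q' = mval Q"
proof (rule antisym)
  have ratio_le: "Ifun Q u / (sup_norm u)\<^sup>2 \<le> Ifun Q' u / (sup_norm u)\<^sup>2" if "u \<in> H1" for u
    using le[OF that] unfolding Ifun_def by (intro divide_right_mono) auto
  have nonneg': "0 \<le> Ifun Q' u" if "u \<in> H1" for u
    using nonneg[OF that] le[OF that] unfolding Ifun_def by linarith
  show "mval Q' \<le> mval Q"
  proof (rule field_le_epsilon)
    fix \<epsilon> :: real assume "0 < \<epsilon>"
    then obtain w where "w \<in> H1" "w \<noteq> (\<lambda>x. 0)" "Ifun Q' w / (sup_norm w)\<^sup>2 \<le> mval Q + \<epsilon>"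
      using approx by blast
    then show "mval Q' \<le> mval Q + \<epsilon>" using mval_le_ratio[OF nonneg'] by fastforce
  qed
  show "mval Q \<le> mval Q'"
    unfolding mval_def[of Q']
  proof (rule cInf_greatest)
    show "{Ifun Q' u / (sup_norm u)\<^sup>2 |u. u \<in> H1 \<and> u \<noteq> (\<lambda>x. 0)} \<noteq> {}"
      using approx[of 1] by auto
  qed (auto intro: order_trans[OF mval_le_ratio[OF nonneg] ratio_le])
qed

lemma Mset_subset_if_mval_eq:
  assumes nonneg: "\<And>u. u \<in> H1 \<Longrightarrow> 0 \<le> Ifun Q u" and le: "\<And>u. u \<in> H1 \<Longrightarrow> Q u \<le> Q' u"
    and eq: "mval Q' = mval Q"
  shows "Mset Q' \<subseteq> Mset Q"
proof
  fix u assume "u \<in> Mset Q'"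
  then have u: "u \<in> H1" "u \<noteq> (\<lambda>x. 0)" "Ifun Q' u / (sup_norm u)\<^sup>2 = mval Q"
    unfolding Mset_def eq by auto
  have "Ifun Q u / (sup_norm u)\<^sup>2 \<le> Ifun Q' u / (sup_norm u)\<^sup>2"
    using le[OF u(1)] unfolding Ifun_def by (intro divide_right_mono) auto
  with u mval_le_ratio[OF nonneg u(1,2)] show "u \<in> Mset Q"
    unfolding Mset_def by auto
qed

section \<open>Near-minimizers vanishing near the origin\<close>

lemma exists_small_square_value:
  fixes u :: "real \<Rightarrow> real"
  assumes ui: "integrable lborel (\<lambda>x. (u x)\<^sup>2)" and S: "(LINT x|lborel. (u x)\<^sup>2) \<le> S" and \<delta>: "0 < \<delta>"
  shows "\<exists>c. s \<le> c \<and> c \<le> s + S / \<delta> + 1 \<and> (u c)\<^sup>2 \<le> \<delta>"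
proof (rule ccontr)
  assume "\<nexists>c. s \<le> c \<and> c \<le> s + S / \<delta> + 1 \<and> (u c)\<^sup>2 \<le> \<delta>"
  then have big: "\<delta> < (u c)\<^sup>2" if "c \<in> {s..s + S / \<delta> + 1}" for c
    using that by (metis atLeastAtMost_iff not_le)
  have "0 \<le> (LINT x|lborel. (u x)\<^sup>2)" by simp
  then have "0 \<le> S" using S by linarith
  then have T: "0 \<le> S / \<delta> + 1" using \<delta> by simp
  have "\<delta> * (S / \<delta> + 1) = (LINT x|lborel. \<delta> * indicator {s..s + S / \<delta> + 1} x)"
    using T by (simp add: emeasure_lborel_Icc_eq)
  also have "\<dots> \<le> (LINT x|lborel. (u x)\<^sup>2)"
  proof (rule integral_mono)
    show "\<delta> * indicator {s..s + S / \<delta> + 1} x \<le> (u x)\<^sup>2" for x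
      using big[of x] by (auto simp: indicator_def less_imp_le)
  qed (use ui integrable_Icc_indicator in auto)
  also have "\<dots> \<le> S" by (rule S)
  finally have "S + \<delta> \<le> S" using \<delta> by (simp add: distrib_left)
  then show False using \<delta> by linarith
qed

lemma L2_le_Ifun:
  fixes V :: "real \<Rightarrow> real"
  assumes [measurable]: "V \<in> borel_measurable lborel" and V: "AE x in lborel. c0 \<le> V x \<and> V x \<le> B"
    and "0 \<le> c0" and u: "u \<in> H1"
  shows "c0 * (LINT x|lborel. (u x)\<^sup>2) \<le> Ifun (fun_form V) u"
proof -
  have ui: "integrable lborel (\<lambda>x. (u x)\<^sup>2)" using u unfolding H1_def by auto
  have "AE x in lborel. \<bar>V x\<bar> \<le> B" using V by eventually_elim (use \<open>0 \<le> c0\<close> in auto)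
  then have Vui: "integrable lborel (\<lambda>x. V x * (u x)\<^sup>2)"
    using ui by (rule integrable_mult_if_AE_bounded[rotated]) simp
  have "c0 * (LINT x|lborel. (u x)\<^sup>2) = (LINT x|lborel. c0 * (u x)\<^sup>2)" by simp
  also have "\<dots> \<le> fun_form V u"
    unfolding fun_form_def using ui Vui V
    by (intro integral_mono_AE) (auto elim!: eventually_mono intro: mult_right_mono)
  finally have "c0 * (LINT x|lborel. (u x)\<^sup>2) \<le> fun_form V u" .
  then show ?thesis using dirichlet_nonneg[of u] unfolding Ifun_def by linarith
qed

lemma Ifun_fun_form_nonneg:
  fixes V :: "real \<Rightarrow> real"
  assumes "V \<in> borel_measurable lborel" "AE x in lborel. c0 \<le> V x \<and> V x \<le> B" "0 \<le> c0" "u \<in> H1"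
  shows "0 \<le> Ifun (fun_form V) u"
  using L2_le_Ifun[OF assms] assms(3) by (simp add: order_trans[rotated])

lemma exists_cheap_cut_point:
  fixes V :: "real \<Rightarrow> real"
  assumes "V \<in> borel_measurable lborel" "AE x in lborel. c0 \<le> V x \<and> V x \<le> B" "0 < c0"
    and "u \<in> H1" "Ifun (fun_form V) u \<le> E" "0 < \<delta>"
  shows "\<exists>c. s \<le> c \<and> c \<le> s + E / (c0 * \<delta>) + 1 \<and> (u c)\<^sup>2 \<le> \<delta>"
proof -
  have "(LINT x|lborel. (u x)\<^sup>2) \<le> E / c0"
    using L2_le_Ifun[OF assms(1,2) _ assms(4)] assms(3,5) by (simp add: field_simps)
  moreover have "integrable lborel (\<lambda>x. (u x)\<^sup>2)" using assms(4) unfolding H1_def by auto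
  ultimately show ?thesis
    using exists_small_square_value[of u "E / c0" \<delta> s] assms(6) by (simp add: divide_divide_eq_left)
qed

lemma near_minimizer_vanishing_below:
  fixes V :: "real \<Rightarrow> real"
  assumes V: "V \<in> borel_measurable lborel" "AE x in lborel. c0 \<le> V x \<and> V x \<le> B" "0 < c0"
    and lim: "((\<lambda>a. Ffun a (fun_form V)) \<longlongrightarrow> mval (fun_form V)) at_top" and \<epsilon>: "0 < \<epsilon>"
  shows "\<exists>a. \<exists>w\<in>Kset a. (\<forall>x\<le>R. w x = 0) \<and> Ifun (fun_form V) w \<le> mval (fun_form V) + \<epsilon>"
proof -
  define m where "m = mval (fun_form V)"
  define e where "e = min \<epsilon> 1"
  define \<delta> where "\<delta> = e / (2 * (1 + \<bar>B\<bar>))"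
  define L where "L = (m + 1) / (c0 * \<delta>)"
  have e: "0 < e" "e \<le> \<epsilon>" "e \<le> 1" using \<epsilon> by (auto simp: e_def)
  have "0 < 1 + \<bar>B\<bar>" by simp
  then have \<delta>: "0 < \<delta>" "(1 + \<bar>B\<bar>) * \<delta> = e / 2"
    using e unfolding \<delta>_def by (auto simp: divide_simps)
  have "\<forall>\<^sub>F a in at_top. Ffun a (fun_form V) < m + e / 2"
    using lim e unfolding m_def by (intro order_tendstoD) auto
  then obtain A where A: "\<And>a. A \<le> a \<Longrightarrow> Ffun a (fun_form V) < m + e / 2"
    by (auto simp: eventually_at_top_linorder)
  define a where "a = max A (R + L + 3)"
  obtain u where u: "u \<in> Kset a" "Ifun (fun_form V) u < m + e / 2"
    using exists_Kset_Ifun_less[OF A[of a]] unfolding a_def by auto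
  have uH: "u \<in> H1" using u(1) unfolding Kset_def by simp
  have "Ifun (fun_form V) u \<le> m + 1" using u(2) e by linarith
  then obtain c where c: "R + 1 \<le> c" "c \<le> R + 1 + L + 1" "(u c)\<^sup>2 \<le> \<delta>"
    using exists_cheap_cut_point[OF V uH _ \<delta>(1)] unfolding L_def by blast
  have VB: "AE x in lborel. 0 \<le> V x \<and> V x \<le> B" using V(2) by eventually_elim (use V(3) in auto)
  have "(1 + B) * (u c)\<^sup>2 \<le> (1 + \<bar>B\<bar>) * \<delta>"
    using c(3) by (intro mult_mono) auto
  then have "Ifun (fun_form V) (cut_below u c) \<le> m + \<epsilon>"
    using Ifun_cut_below_le[OF V(1) VB uH, of c] u(2) \<delta>(2) e by linarith
  moreover have "cut_below u c \<in> Kset a"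
    using cut_below_in_Kset[OF u(1)] c(2) unfolding a_def by simp
  moreover have "\<forall>x\<le>R. cut_below u c x = 0" using c(1) unfolding cut_below_def by simp
  ultimately show ?thesis unfolding m_def by blast
qed

lemma near_minimizer_vanishing_above:
  fixes V :: "real \<Rightarrow> real"
  assumes V: "V \<in> borel_measurable lborel" "AE x in lborel. c0 \<le> V x \<and> V x \<le> B" "0 < c0"
    and lim: "((\<lambda>a. Ffun a (fun_form V)) \<longlongrightarrow> mval (fun_form V)) at_bot" and \<epsilon>: "0 < \<epsilon>"
  shows "\<exists>a. \<exists>w\<in>Kset a. (\<forall>x\<ge>R. w x = 0) \<and> Ifun (fun_form V) w \<le> mval (fun_form V) + \<epsilon>"
proof -
  define m where "m = mval (fun_form V)"
  define e where "e = min \<epsilon> 1"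
  define \<delta> where "\<delta> = e / (2 * (1 + \<bar>B\<bar>))"
  define L where "L = (m + 1) / (c0 * \<delta>)"
  have e: "0 < e" "e \<le> \<epsilon>" "e \<le> 1" using \<epsilon> by (auto simp: e_def)
  have "0 < 1 + \<bar>B\<bar>" by simp
  then have \<delta>: "0 < \<delta>" "(1 + \<bar>B\<bar>) * \<delta> = e / 2"
    using e unfolding \<delta>_def by (auto simp: divide_simps)
  have "\<forall>\<^sub>F a in at_bot. Ffun a (fun_form V) < m + e / 2"
    using lim e unfolding m_def by (intro order_tendstoD) auto
  then obtain A where A: "\<And>a. a \<le> A \<Longrightarrow> Ffun a (fun_form V) < m + e / 2"
    by (auto simp: eventually_at_bot_linorder)
  define a where "a = min A (R - L - 2)"
  obtain u where u: "u \<in> Kset a" "Ifun (fun_form V) u < m + e / 2"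
    using exists_Kset_Ifun_less[OF A[of a]] unfolding a_def by auto
  have uH: "u \<in> H1" using u(1) unfolding Kset_def by simp
  have "Ifun (fun_form V) u \<le> m + 1" using u(2) e by linarith
  then obtain c where c: "R - L - 2 \<le> c" "c \<le> R - L - 2 + L + 1" "(u c)\<^sup>2 \<le> \<delta>"
    using exists_cheap_cut_point[OF V uH _ \<delta>(1)] unfolding L_def by blast
  have VB: "AE x in lborel. 0 \<le> V x \<and> V x \<le> B" using V(2) by eventually_elim (use V(3) in auto)
  have "(1 + B) * (u c)\<^sup>2 \<le> (1 + \<bar>B\<bar>) * \<delta>"
    using c(3) by (intro mult_mono) auto
  then have "Ifun (fun_form V) (cut_above u c) \<le> m + \<epsilon>"
    using Ifun_cut_above_le[OF V(1) VB uH, of c] u(2) \<delta>(2) e by linarith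
  moreover have "cut_above u c \<in> Kset a"
    using cut_above_in_Kset[OF u(1)] c(1) unfolding a_def by simp
  moreover have "\<forall>x\<ge>R. cut_above u c x = 0" using c(2) unfolding cut_above_def by simp
  ultimately show ?thesis unfolding m_def by blast
qed

lemma perturbed_ratio_near_mval:
  fixes V \<mu>0 :: "real \<Rightarrow> real" and \<nu>p \<nu>n :: "real measure"
  assumes V: "V \<in> borel_measurable lborel" "AE x in lborel. c0 \<le> V x \<and> V x \<le> B" "0 < c0"
    and lim: "((\<lambda>a. Ffun a (fun_form V)) \<longlongrightarrow> mval (fun_form V)) at_top \<or>
              ((\<lambda>a. Ffun a (fun_form V)) \<longlongrightarrow> mval (fun_form V)) at_bot"
    and \<mu>: "\<mu>0 \<in> borel_measurable lborel" "integrable lborel (\<lambda>x. \<bar>\<mu>0 x\<bar> powr p)" "1 \<le> p"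
      "sets \<nu>p = sets borel" "finite_measure \<nu>p"
    and \<epsilon>: "0 < \<epsilon>"
  shows "\<exists>w\<in>H1. w \<noteq> (\<lambda>x. 0) \<and>
           Ifun (\<lambda>u. fun_form V u + (fun_form \<mu>0 u + meas_form \<nu>p u - meas_form \<nu>n u)) w / (sup_norm w)\<^sup>2
             \<le> mval (fun_form V) + \<epsilon>"
proof -
  define m where "m = mval (fun_form V)"
  define S where "S = (m + 1) / c0"
  have "0 \<le> m"
    unfolding m_def using Ifun_fun_form_nonneg[OF V(1,2)] V(3) by (intro mval_nonneg) auto
  then have "0 \<le> S" using V(3) by (simp add: S_def)
  then obtain R where R: "\<forall>w\<in>H1. (\<forall>x. \<bar>w x\<bar> \<le> 1) \<longrightarrow> (\<forall>x. \<bar>x\<bar> \<le> R \<longrightarrow> w x = 0) \<longrightarrow>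
      (LINT x|lborel. (w x)\<^sup>2) \<le> S \<longrightarrow> fun_form \<mu>0 w + meas_form \<nu>p w - meas_form \<nu>n w \<le> \<epsilon> / 2"
    using perturbation_small_far_out[OF \<mu>, of S "\<epsilon> / 2" \<nu>n] \<epsilon> by auto
  have e: "0 < min (\<epsilon> / 2) 1" using \<epsilon> by simp
  from lim have "\<exists>a. \<exists>w\<in>Kset a. (\<forall>x. \<bar>x\<bar> \<le> R \<longrightarrow> w x = 0) \<and>
      Ifun (fun_form V) w \<le> m + min (\<epsilon> / 2) 1"
  proof (elim disjE)
    assume "((\<lambda>a. Ffun a (fun_form V)) \<longlongrightarrow> mval (fun_form V)) at_top"
    from near_minimizer_vanishing_below[OF V this e, of R] show ?thesis
      unfolding m_def by (meson abs_ge_self order.trans)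
  next
    assume "((\<lambda>a. Ffun a (fun_form V)) \<longlongrightarrow> mval (fun_form V)) at_bot"
    from near_minimizer_vanishing_above[OF V this e, of "- R"] show ?thesis
      unfolding m_def by (meson abs_le_iff minus_le_iff)
  qed
  then obtain a w where w: "w \<in> Kset a" "\<forall>x. \<bar>x\<bar> \<le> R \<longrightarrow> w x = 0"
    "Ifun (fun_form V) w \<le> m + min (\<epsilon> / 2) 1"
    by blast
  have wH: "w \<in> H1" "w a = 1" "sup_norm w = 1" using w(1) unfolding Kset_def by auto
  have "c0 * (LINT x|lborel. (w x)\<^sup>2) \<le> m + 1"
    using L2_le_Ifun[OF V(1,2) _ wH(1)] V(3) w(3) by linarith
  then have "(LINT x|lborel. (w x)\<^sup>2) \<le> S" using V(3) by (simp add: S_def field_simps)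
  then have "fun_form \<mu>0 w + meas_form \<nu>p w - meas_form \<nu>n w \<le> \<epsilon> / 2"
    using R wH(1) w(2) Kset_abs_le_one[OF w(1)] by blast
  then have "Ifun (\<lambda>u. fun_form V u + (fun_form \<mu>0 u + meas_form \<nu>p u - meas_form \<nu>n u)) w
      / (sup_norm w)\<^sup>2 \<le> m + \<epsilon>"
    using w(3) wH(3) unfolding Ifun_def by simp
  moreover have "w \<noteq> (\<lambda>x. 0)" using wH(2) by auto
  ultimately show ?thesis using wH(1) unfolding m_def by blast
qed

theorem theorem4p4:
  fixes V \<mu>0 :: "real \<Rightarrow> real" and \<nu>p \<nu>n :: "real measure" and p :: real
  assumes V_meas: "V \<in> borel_measurable lborel"
    and V_bdd: "\<exists>C. AE x in lborel. \<bar>V x\<bar> \<le> C"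
    and V_pos: "\<exists>c>0. AE x in lborel. c \<le> V x"
    and lim: "((\<lambda>a. Ffun a (fun_form V)) \<longlongrightarrow> mval (fun_form V)) at_top \<or>
              ((\<lambda>a. Ffun a (fun_form V)) \<longlongrightarrow> mval (fun_form V)) at_bot"
    and p: "1 \<le> p"
    and mu0_meas: "\<mu>0 \<in> borel_measurable lborel"
    and mu0_Lp: "integrable lborel (\<lambda>x. \<bar>\<mu>0 x\<bar> powr p)"
    and nup: "sets \<nu>p = sets borel" "finite_measure \<nu>p"
    and nun: "sets \<nu>n = sets borel" "finite_measure \<nu>n"
    and mu_nonneg: "\<forall>u\<in>H1. 0 \<le> fun_form \<mu>0 u + meas_form \<nu>p u - meas_form \<nu>n u"
  shows "mval (\<lambda>u. fun_form V u + (fun_form \<mu>0 u + meas_form \<nu>p u - meas_form \<nu>n u))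
           = mval (fun_form V) \<and>
         Mset (\<lambda>u. fun_form V u + (fun_form \<mu>0 u + meas_form \<nu>p u - meas_form \<nu>n u))
           \<subseteq> Mset (fun_form V)"
proof -
  obtain c0 C where c0: "0 < c0" "AE x in lborel. c0 \<le> V x" and C: "AE x in lborel. \<bar>V x\<bar> \<le> C"
    using V_pos V_bdd by blast
  have V: "AE x in lborel. c0 \<le> V x \<and> V x \<le> C" using c0(2) C by eventually_elim auto
  have nonneg: "0 \<le> Ifun (fun_form V) u" if "u \<in> H1" for u
    using Ifun_fun_form_nonneg[OF V_meas V _ that] c0(1) by simp
  have le: "fun_form V u \<le> fun_form V u + (fun_form \<mu>0 u + meas_form \<nu>p u - meas_form \<nu>n u)"
    if "u \<in> H1" for u using mu_nonneg that by simp
  have eq: "mval (\<lambda>u. fun_form V u + (fun_form \<mu>0 u + meas_form \<nu>p u - meas_form \<nu>n u))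
      = mval (fun_form V)"
    using perturbed_ratio_near_mval[OF V_meas V c0(1) lim mu0_meas mu0_Lp p nup]
    by (intro mval_eq_if_approximable[OF nonneg le]) auto
  then show ?thesis using Mset_subset_if_mval_eq[OF nonneg le] by blast
qed

end
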